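(* There exists a constant $C>0$ such that for all integers $n\ge2$, $g\ge1$ with $\theta:=g/n\ge x^{-2/3}$, where $x:=n+g$, \[\Big|\beta(n,g)-e^{-f'(\theta)}-\frac{e^{-f'(\theta)}}{n}\Big(\frac{f''(\theta)}{2}-j'(\theta)\Big)\Big|\le C\,x^{-4/3}.\]
   Context: Define $\lambda:[0,\infty)\to(0,1/4]$ by $\lambda(0)=1/4$ and, for $\theta>0$, $\lambda(\theta)$ is the unique $\lambda\in(0,1/4)$ with $-1+\frac{\operatorname{artanh}(\sqrt{1-4\lambda})}{\sqrt{1-4\lambda}}=\theta$. For $\theta>0$ set $f(\theta)=-\ln\lambda(\theta)-2\theta-\theta\ln(1-4\lambda(\theta))$ and $j(\theta)=-\tfrac12\ln(1-4(\theta+1)\lambda(\theta))+\tfrac12\ln 2$. For integers $n\ge1$, $g\ge1$ let \[\Omega(n,g)=\frac{\sqrt g\,g^g}{\sqrt{2\pi}\,e^g\,g!}\,n^{2g-2}\exp\!\Big(nf\big(\tfrac gn\big)+j\big(\tfrac gn\big)\Big),\qquad \Omega(n,0)=\frac{4^n n^{-3/2}}{\sqrt{2\pi}},\] and for $n\ge2$, $g\ge1$ let $\beta(n,g)=n^2\frac{\Omega(n,g-1)}{\Omega(n,g)}$. *)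

theory Defs
  imports "HOL-Analysis.Analysis"
begin

definition lam :: "real \<Rightarrow> real" where
  "lam \<theta> = (if \<theta> \<le> 0 then 1/4 else
     (THE l. 0 < l \<and> l < 1/4 \<and> -1 + artanh (sqrt (1 - 4*l)) / sqrt (1 - 4*l) = \<theta>))"

definition fF :: "real \<Rightarrow> real" where
  "fF \<theta> = - ln (lam \<theta>) - 2*\<theta> - \<theta> * ln (1 - 4 * lam \<theta>)"

definition jJ :: "real \<Rightarrow> real" where
  "jJ \<theta> = - (1/2) * ln (1 - 4*(\<theta>+1) * lam \<theta>) + (1/2) * ln 2"

definition Omega :: "nat \<Rightarrow> nat \<Rightarrow> real" where
  "Omega n g = (if g = 0 then 4 ^ n * real n powr (-3/2) / sqrt (2*pi)
     else sqrt (real g) * real g ^ g / (sqrt (2*pi) * exp (real g) * fact g)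
          * real n ^ (2*g - 2) * exp (real n * fF (real g / real n) + jJ (real g / real n)))"

definition beta :: "nat \<Rightarrow> nat \<Rightarrow> real" where
  "beta n g = real n ^ 2 * Omega n (g - 1) / Omega n g"

end

theory Submission
  imports Defs "HOL-Real_Asymp.Real_Asymp"
begin

(* Substituting \<theta> = u coth u - 1 turns the equation defining \<lambda> into sqrt (1 - 4 \<lambda>) = tanh u,
   i.e. \<lambda> = 1 / (4 cosh\<^sup>2 u).  Then f and j are explicit in u, their \<theta>-derivatives are
   u-derivatives divided by d\<theta>/du, and exp (- f' \<theta>) = tanh\<^sup>2 u.  The asymptotics as u \<rightarrow> 0 and
   u \<rightarrow> \<infinity> show that \<theta> f'', \<theta>\<^sup>2 f''', \<theta> j', \<theta>\<^sup>2 j'' and exp (- f')/\<theta> are bounded on (0, \<infinity>).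
   Since the prefactor of \<Omega> is a Stirling quotient, log \<beta>(n, g) equals
   n (f (\<theta> - 1/n) - f \<theta>) + j (\<theta> - 1/n) - j \<theta> + O(1/g\<^sup>2), and Taylor expansion at \<theta> gives
   \<beta> = exp (- f') (1 + (f''/2 - j')/n + O(1/g\<^sup>2)).  Finally exp (- f') \<le> min 1 (K \<theta>) and
   \<theta> \<ge> x powr (-2/3) turn exp (- f')/g\<^sup>2 into O(x powr (-4/3)); g = 1 only occurs for n = 2. *)

section \<open>The parametrization by u\<close>

definition delta :: "real \<Rightarrow> real" where
  "delta u = sinh u * cosh u - u"

definition phi :: "real \<Rightarrow> real" where
  "phi u = u * cosh u / sinh u - 1"

definition dphi :: "real \<Rightarrow> real" where
  "dphi u = delta u / sinh u ^ 2"

lemma cosh_mult_self: "cosh u * cosh u = 1 + sinh u * sinh (u::real)"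
  using cosh_square_eq[of u] by (simp add: power2_eq_square)

lemma one_minus_tanh_square: "1 - tanh u ^ 2 = 1 / cosh u ^ 2" for u :: real
proof -
  have "1 - tanh u ^ 2 = (cosh u ^ 2 - sinh u ^ 2) / cosh u ^ 2"
    by (simp add: tanh_def power_divide field_simps)
  then show ?thesis by (simp add: cosh_square_eq)
qed

lemma one_minus_tanh_square_div_tanh: "(1 - tanh u ^ 2) / tanh u = 1 / (sinh u * cosh u)"
  for u :: real
  unfolding one_minus_tanh_square by (simp add: tanh_def field_simps power2_eq_square)

lemma has_real_derivative_delta: "(delta has_real_derivative 2 * sinh u ^ 2) (at u)"
  unfolding delta_def
  by (rule derivative_eq_intros refl)+ (simp add: cosh_mult_self power2_eq_square)

lemma delta_pos:
  assumes "0 < u" shows "0 < delta u"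
proof -
  obtain z where "0 < z" "delta u - delta 0 = (u - 0) * (2 * sinh z ^ 2)"
    using MVT2[of 0 u delta "\<lambda>x. 2 * sinh x ^ 2"] assms has_real_derivative_delta by blast
  then show ?thesis using assms by (simp add: delta_def)
qed

lemma has_real_derivative_phi:
  assumes "0 < u" shows "(phi has_real_derivative dphi u) (at u)"
proof -
  have "sinh u \<noteq> 0" using assms by simp
  then show ?thesis
    unfolding phi_def[abs_def] dphi_def delta_def
    by (auto intro!: derivative_eq_intros simp: field_simps power2_eq_square cosh_mult_self)
qed

lemma dphi_pos: "0 < u \<Longrightarrow> 0 < dphi u"
  by (simp add: dphi_def delta_pos)

lemma phi_pos:
  assumes "0 < u" shows "0 < phi u"
proof -
  let ?G = "\<lambda>x::real. x * cosh x - sinh x"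
  have "(?G has_real_derivative x * sinh x) (at x)" for x
    by (rule derivative_eq_intros refl)+ simp
  then obtain z where "0 < z" "?G u - ?G 0 = (u - 0) * (z * sinh z)"
    using MVT2[of 0 u ?G "\<lambda>x. x * sinh x"] assms by blast
  then have "0 < ?G u" using assms by simp
  then show ?thesis using assms by (simp add: phi_def field_simps)
qed

lemma phi_strict_mono_on: "strict_mono_on {0<..} phi"
proof (rule strict_mono_onI)
  fix a b :: real assume "a \<in> {0<..}" "b \<in> {0<..}" "a < b"
  show "phi a < phi b"
  proof (rule DERIV_pos_imp_increasing[OF \<open>a < b\<close>])
    fix x assume "a \<le> x" "x \<le> b"
    with \<open>a \<in> {0<..}\<close> have "0 < x" by simp
    then show "\<exists>y. (phi has_real_derivative y) (at x) \<and> 0 < y"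
      using has_real_derivative_phi dphi_pos by blast
  qed
qed

lemma phi_inj_on: "inj_on phi {0<..}"
  using phi_strict_mono_on by (rule strict_mono_on_imp_inj_on)

lemma phi_eq_iff: "0 < a \<Longrightarrow> 0 < b \<Longrightarrow> phi a = phi b \<longleftrightarrow> a = b"
  using inj_on_eq_iff[OF phi_inj_on] by simp

lemma continuous_on_phi: "continuous_on {0<..} phi"
  unfolding phi_def by (intro continuous_intros) auto

lemma phi_surj:
  assumes "0 < t" shows "\<exists>u>0. phi u = t"
proof -
  have "(phi \<longlongrightarrow> 0) (at_right 0)" "filterlim phi at_top at_top"
    unfolding phi_def by real_asymp+
  then have "\<forall>\<^sub>F u in at_right 0. phi u < t" "\<forall>\<^sub>F u in at_top. t < phi u"
    using order_tendstoD(2)[of phi 0 "at_right 0" t] assms by (simp_all add: filterlim_at_top_dense)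
  then obtain a N where a: "0 < a" "\<And>y. 0 < y \<Longrightarrow> y < a \<Longrightarrow> phi y < t"
    and N: "\<And>y. N \<le> y \<Longrightarrow> t < phi y"
    unfolding eventually_at_right_field eventually_at_top_linorder by auto
  define b where "b = max N (a / 2)"
  have ab: "0 < a / 2" "phi (a / 2) < t" "a / 2 \<le> b" "t < phi b"
    using a N by (auto simp: b_def)
  moreover have "continuous_on {a / 2..b} phi"
    using ab(1) by (intro continuous_on_subset[OF continuous_on_phi]) auto
  ultimately obtain u where "a / 2 \<le> u" "phi u = t"
    using IVT'[of phi "a / 2" t b] by auto
  with ab show ?thesis by (intro exI[of _ u]) auto
qed

definition psi :: "real \<Rightarrow> real" where
  "psi t = (THE u. 0 < u \<and> phi u = t)"

lemma psi_pos_phi_psi: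
  assumes "0 < t" shows "0 < psi t" "phi (psi t) = t"
proof -
  obtain u where u: "0 < u" "phi u = t" using phi_surj assms by blast
  have "psi t = u" unfolding psi_def
    by (rule the_equality) (use u in \<open>auto simp: phi_eq_iff\<close>)
  with u show "0 < psi t" "phi (psi t) = t" by auto
qed

lemma psi_phi: "0 < u \<Longrightarrow> psi (phi u) = u"
  using psi_pos_phi_psi[of "phi u"] phi_pos phi_eq_iff by simp

lemma isCont_psi:
  assumes "0 < t" shows "isCont psi t"
proof -
  define u where "u = psi t"
  have u: "0 < u" "phi u = t" using psi_pos_phi_psi[OF assms] by (auto simp: u_def)
  have "isCont psi (phi u)"
    by (rule isCont_inverse_function2[of "u / 2" u "u + 1"])
       (use u in \<open>auto intro: psi_phi DERIV_isCont[OF has_real_derivative_phi]\<close>)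
  with u show ?thesis by simp
qed

lemma has_real_derivative_psi:
  assumes "0 < t" shows "(psi has_real_derivative inverse (dphi (psi t))) (at t)"
  using psi_pos_phi_psi[OF assms] assms
  by (intro DERIV_inverse_function[where f = phi and a = 0 and b = "t + 1"])
     (auto intro: has_real_derivative_phi isCont_psi psi_pos_phi_psi simp: dphi_pos less_imp_neq[symmetric])

lemma has_real_derivative_comp_psi:
  assumes G: "\<And>u. 0 < u \<Longrightarrow> (G has_real_derivative H u * dphi u) (at u)" and "0 < t"
  shows "((\<lambda>t. G (psi t)) has_real_derivative H (psi t)) (at t)"
proof -
  have u: "0 < psi t" using psi_pos_phi_psi[OF \<open>0 < t\<close>] by simp
  have "H (psi t) * dphi (psi t) * inverse (dphi (psi t)) = H (psi t)"
    using dphi_pos[OF u] by simp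
  with DERIV_chain2[OF G[OF u] has_real_derivative_psi[OF \<open>0 < t\<close>]] show ?thesis
    by simp
qed

lemma tanh_artanh_real:
  assumes "- 1 < s" "s < (1::real)" shows "tanh (artanh s) = s"
proof -
  have "exp (- 2 * artanh s) = (1 - s) / (1 + s)"
    unfolding artanh_def using assms by (simp add: exp_minus exp_ln)
  moreover have "(1 - (1 - s) / (1 + s)) / (1 + (1 - s) / (1 + s)) = s"
    using assms by (simp add: field_simps)
  ultimately show ?thesis by (simp add: tanh_real_altdef)
qed

lemma lam_phi:
  assumes u: "0 < u" shows "lam (phi u) = 1 / (4 * cosh u ^ 2)"
proof -
  define L where "L = 1 / (4 * cosh u ^ 2)"
  have "4 * L = 1 / cosh u ^ 2" by (simp add: L_def)
  then have "1 - 4 * L = tanh u ^ 2" using one_minus_tanh_square[of u] by linarith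
  then have sqrt_L: "sqrt (1 - 4 * L) = tanh u" using u by simp
  have phi_tanh: "phi v = v / tanh v - 1" for v
    by (simp add: phi_def tanh_def)
  have "1 < cosh u ^ 2" using u by (simp add: cosh_square_eq)
  then have "0 < L" "L < 1/4" by (simp_all add: L_def)
  moreover have "- 1 + artanh (sqrt (1 - 4 * L)) / sqrt (1 - 4 * L) = phi u"
    unfolding sqrt_L artanh_tanh_real phi_tanh by simp
  ultimately have L: "0 < L \<and> L < 1/4 \<and> - 1 + artanh (sqrt (1 - 4 * L)) / sqrt (1 - 4 * L) = phi u"
    by blast
  have "lam (phi u) = (THE l. 0 < l \<and> l < 1/4 \<and>
          - 1 + artanh (sqrt (1 - 4 * l)) / sqrt (1 - 4 * l) = phi u)"
    using phi_pos[OF u] by (simp add: lam_def)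
  also have "\<dots> = L"
  proof (rule the_equality)
    fix l assume l: "0 < l \<and> l < 1/4 \<and> - 1 + artanh (sqrt (1 - 4 * l)) / sqrt (1 - 4 * l) = phi u"
    define v where "v = artanh (sqrt (1 - 4 * l))"
    have s: "0 < sqrt (1 - 4 * l)" "sqrt (1 - 4 * l) < 1" using l by auto
    have tv: "tanh v = sqrt (1 - 4 * l)"
      unfolding v_def by (rule tanh_artanh_real) (use s in linarith)+
    from s(1) have "0 < tanh v" by (simp only: tv)
    then have "0 < v" by simp
    have "phi v = v / sqrt (1 - 4 * l) - 1" by (simp add: phi_tanh tv)
    also have "\<dots> = phi u" using l by (simp add: v_def)
    finally have "v = u" using \<open>0 < v\<close> u phi_eq_iff by simp
    then have "sqrt (1 - 4 * l) = sqrt (1 - 4 * L)" using tv sqrt_L by simp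
    then show "l = L" by simp
  qed (use L in simp)
  finally show ?thesis by (simp add: L_def)
qed

section \<open>The functions f and j and their derivatives\<close>

(* f1_u, f2_u, f3_u and j1_u, j2_u are f', f'', f''' and j', j'' as functions of u. *)

definition f_u :: "real \<Rightarrow> real" where
  "f_u u = ln 4 + 2 * ln (cosh u) - 2 * phi u - 2 * phi u * ln (tanh u)"

definition f1_u :: "real \<Rightarrow> real" where
  "f1_u u = - 2 * ln (tanh u)"

definition f2_u :: "real \<Rightarrow> real" where
  "f2_u u = - 2 * sinh u / (cosh u * delta u)"

definition f3_u :: "real \<Rightarrow> real" where
  "f3_u u = - 2 * (delta u - 2 * sinh u ^ 3 * cosh u) * sinh u ^ 2 / (cosh u ^ 2 * delta u ^ 3)"

definition j_u :: "real \<Rightarrow> real" where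
  "j_u u = - (1/2) * (ln (delta u) - ln (sinh u) - ln (cosh u)) + (1/2) * ln 2"

definition j1_u :: "real \<Rightarrow> real" where
  "j1_u u = -(1/2) * (u * (cosh u ^ 2 + sinh u ^ 2) - sinh u * cosh u) * sinh u
              / (delta u ^ 2 * cosh u)"

definition j2_u :: "real \<Rightarrow> real" where
  "j2_u u = -(1/2) * sinh u ^ 2 / delta u *
     ((4 * u * sinh u ^ 2 * cosh u + (u * (cosh u ^ 2 + sinh u ^ 2) - sinh u * cosh u) * cosh u)
        / (delta u ^ 2 * cosh u)
      - (u * (cosh u ^ 2 + sinh u ^ 2) - sinh u * cosh u) * sinh u
        * (4 * sinh u ^ 2 * cosh u + delta u * sinh u) / (delta u ^ 3 * cosh u ^ 2))"

lemma fF_phi: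
  assumes u: "0 < u" shows "fF (phi u) = f_u u"
proof -
  have "4 * (1 / (4 * cosh u ^ 2)) = 1 / cosh u ^ 2" by simp
  then have "1 - 4 * (1 / (4 * cosh u ^ 2)) = tanh u ^ 2"
    using one_minus_tanh_square[of u] by linarith
  then have "ln (1 - 4 * (1 / (4 * cosh u ^ 2))) = 2 * ln (tanh u)"
    using u by (simp add: ln_realpow)
  moreover have "ln (1 / (4 * cosh u ^ 2)) = - ln 4 - 2 * ln (cosh u)"
    by (simp add: ln_div ln_mult ln_realpow)
  ultimately show ?thesis
    by (simp add: fF_def lam_phi[OF u] f_u_def)
qed

lemma jJ_phi:
  assumes u: "0 < u" shows "jJ (phi u) = j_u u"
proof -
  have s: "0 < sinh u" "0 < delta u" using u delta_pos by auto
  then have "1 - 4 * (phi u + 1) * (1 / (4 * cosh u ^ 2)) = delta u / (sinh u * cosh u)"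
    by (simp add: phi_def delta_def field_simps power2_eq_square)
  then show ?thesis
    using s by (simp add: jJ_def lam_phi[OF u] j_u_def ln_div ln_mult)
qed

lemma has_real_derivative_f_u:
  assumes u: "0 < u" shows "(f_u has_real_derivative f1_u u * dphi u) (at u)"
proof -
  have s: "0 < sinh u" "0 < tanh u" using u by auto
  have "(f_u has_real_derivative
          2 * (sinh u / cosh u) - 2 * dphi u
          - (2 * dphi u * ln (tanh u) + 2 * phi u * ((1 - tanh u ^ 2) / tanh u))) (at u)"
    unfolding f_u_def[abs_def] using s
    by (auto intro!: derivative_eq_intros has_real_derivative_phi[OF u] simp: mult_ac)
  moreover have "2 * (sinh u / cosh u) - 2 * dphi u - 2 * phi u * ((1 - tanh u ^ 2) / tanh u) = 0"
  proof -
    have "(1 - tanh u ^ 2) / tanh u = 1 / (sinh u * cosh u)"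
      by (rule one_minus_tanh_square_div_tanh)
    then show ?thesis
      using s unfolding dphi_def phi_def delta_def
      apply (simp add: field_simps power2_eq_square)
      using cosh_mult_self[of u] by algebra
  qed
  ultimately show ?thesis
    unfolding f1_u_def by (simp add: algebra_simps)
qed

lemma has_real_derivative_f1_u:
  assumes u: "0 < u" shows "(f1_u has_real_derivative f2_u u * dphi u) (at u)"
proof -
  have s: "0 < sinh u" "0 < tanh u" "0 < delta u" using u delta_pos by auto
  have "(f1_u has_real_derivative - 2 * ((1 - tanh u ^ 2) / tanh u)) (at u)"
    unfolding f1_u_def[abs_def] using s by (auto intro!: derivative_eq_intros simp: field_simps)
  moreover have "- 2 * ((1 - tanh u ^ 2) / tanh u) = f2_u u * dphi u"
    unfolding one_minus_tanh_square_div_tanh f2_u_def dphi_def using s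
    by (simp add: field_simps power2_eq_square)
  ultimately show ?thesis by simp
qed

lemma has_real_derivative_f2_u:
  assumes u: "0 < u" shows "(f2_u has_real_derivative f3_u u * dphi u) (at u)"
proof -
  have s: "0 < sinh u" "0 < delta u" using u delta_pos by auto
  show ?thesis
    unfolding f2_u_def[abs_def] f3_u_def dphi_def using s
    apply (auto intro!: derivative_eq_intros has_real_derivative_delta)
    apply (simp add: field_simps power2_eq_square)
    using cosh_mult_self[of u] by algebra
qed

lemma has_real_derivative_j_u:
  assumes u: "0 < u" shows "(j_u has_real_derivative j1_u u * dphi u) (at u)"
proof -
  have s: "0 < sinh u" "0 < delta u" using u delta_pos by auto
  have "(j_u has_real_derivative
          - (1/2) * (2 * sinh u ^ 2 / delta u - cosh u / sinh u - sinh u / cosh u)) (at u)"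
    unfolding j_u_def[abs_def] using s
    by (auto intro!: derivative_eq_intros has_real_derivative_delta simp: mult_ac)
  moreover have "- (1/2) * (2 * sinh u ^ 2 / delta u - cosh u / sinh u - sinh u / cosh u)
                 = j1_u u * dphi u"
    unfolding j1_u_def dphi_def using s
    apply (simp add: field_simps power2_eq_square)
    using cosh_mult_self[of u] unfolding delta_def by algebra
  ultimately show ?thesis by simp
qed

lemma has_real_derivative_j1_u:
  assumes u: "0 < u" shows "(j1_u has_real_derivative j2_u u * dphi u) (at u)"
proof -
  have s: "0 < sinh u" "0 < delta u" using u delta_pos by auto
  show ?thesis
    unfolding j1_u_def[abs_def] j2_u_def dphi_def using s
    apply (auto intro!: derivative_eq_intros has_real_derivative_delta)
    apply (simp add: field_simps power2_eq_square)
    by algebra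
qed

definition f1 :: "real \<Rightarrow> real" where "f1 t = f1_u (psi t)"
definition f2 :: "real \<Rightarrow> real" where "f2 t = f2_u (psi t)"
definition f3 :: "real \<Rightarrow> real" where "f3 t = f3_u (psi t)"
definition j1 :: "real \<Rightarrow> real" where "j1 t = j1_u (psi t)"
definition j2 :: "real \<Rightarrow> real" where "j2 t = j2_u (psi t)"

lemma fF_eq: "0 < t \<Longrightarrow> fF t = f_u (psi t)"
  using fF_phi[of "psi t"] psi_pos_phi_psi[of t] by simp

lemma jJ_eq: "0 < t \<Longrightarrow> jJ t = j_u (psi t)"
  using jJ_phi[of "psi t"] psi_pos_phi_psi[of t] by simp

lemma has_real_derivative_fF:
  assumes "0 < t" shows "(fF has_real_derivative f1 t) (at t)"
proof -
  have "((\<lambda>t. f_u (psi t)) has_real_derivative f1 t) (at t)"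
    unfolding f1_def using has_real_derivative_f_u assms by (rule has_real_derivative_comp_psi)
  then show ?thesis
    by (rule has_field_derivative_transform_within_open[where S = "{0<..}"])
       (use assms fF_eq in auto)
qed

lemma has_real_derivative_f1: "0 < t \<Longrightarrow> (f1 has_real_derivative f2 t) (at t)"
  unfolding f1_def[abs_def] f2_def using has_real_derivative_f1_u by (rule has_real_derivative_comp_psi)

lemma has_real_derivative_f2: "0 < t \<Longrightarrow> (f2 has_real_derivative f3 t) (at t)"
  unfolding f2_def[abs_def] f3_def using has_real_derivative_f2_u by (rule has_real_derivative_comp_psi)

lemma has_real_derivative_jJ:
  assumes "0 < t" shows "(jJ has_real_derivative j1 t) (at t)"
proof -
  have "((\<lambda>t. j_u (psi t)) has_real_derivative j1 t) (at t)"
    unfolding j1_def using has_real_derivative_j_u assms by (rule has_real_derivative_comp_psi)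
  then show ?thesis
    by (rule has_field_derivative_transform_within_open[where S = "{0<..}"])
       (use assms jJ_eq in auto)
qed

lemma has_real_derivative_j1: "0 < t \<Longrightarrow> (j1 has_real_derivative j2 t) (at t)"
  unfolding j1_def[abs_def] j2_def using has_real_derivative_j1_u by (rule has_real_derivative_comp_psi)

lemma deriv_fF: "0 < t \<Longrightarrow> deriv fF t = f1 t"
  using has_real_derivative_fF by (rule DERIV_imp_deriv)

lemma deriv2_fF:
  assumes "0 < t" shows "deriv (deriv fF) t = f2 t"
proof -
  have "(deriv fF has_real_derivative f2 t) (at t)"
    using has_real_derivative_f1[OF assms]
    by (rule has_field_derivative_transform_within_open[where S = "{0<..}"])
       (use assms deriv_fF in auto)
  then show ?thesis by (rule DERIV_imp_deriv)
qed

lemma deriv_jJ: "0 < t \<Longrightarrow> deriv jJ t = j1 t"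
  using has_real_derivative_jJ by (rule DERIV_imp_deriv)

lemma exp_neg_f1:
  assumes "0 < t" shows "exp (- f1 t) = tanh (psi t) ^ 2"
proof -
  have "0 < tanh (psi t)" using psi_pos_phi_psi[OF assms] by simp
  then have "exp (- f1 t) = exp (ln (tanh (psi t) ^ 2))"
    by (simp add: f1_def f1_u_def ln_realpow)
  with \<open>0 < tanh (psi t)\<close> show ?thesis by simp
qed

section \<open>Boundedness of the weighted derivatives\<close>

lemma bounded_on_atLeast:
  fixes q :: "real \<Rightarrow> 'a::real_normed_field"
  assumes "continuous_on {a..} q" and "q \<in> O[at_top](\<lambda>_. 1)"
  shows "\<exists>K. \<forall>x\<ge>a. norm (q x) \<le> K"
proof -
  obtain c where "\<forall>\<^sub>F x in at_top. norm (q x) \<le> c"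
    using assms(2) by (elim landau_o.bigE) auto
  then obtain N where N: "\<And>x. N \<le> x \<Longrightarrow> norm (q x) \<le> c"
    unfolding eventually_at_top_linorder by auto
  have "compact (q ` {a..max a N})"
    by (intro compact_continuous_image continuous_on_subset[OF assms(1)]) auto
  then have "bounded (q ` {a..max a N})" by (rule compact_imp_bounded)
  then obtain d where "\<forall>y\<in>q ` {a..max a N}. norm y \<le> d"
    unfolding bounded_iff by blast
  then have d: "\<And>x. x \<in> {a..max a N} \<Longrightarrow> norm (q x) \<le> d" by blast
  have "norm (q x) \<le> max c d" if "a \<le> x" for x
    using N[of x] d[of x] that by (cases "N \<le> x") auto
  then show ?thesis by blast
qed

lemma bounded_on_greaterThan:
  fixes q :: "real \<Rightarrow> 'a::real_normed_field"
  assumes "continuous_on {a<..} q" and "q \<in> O[at_right a](\<lambda>_. 1)" and "q \<in> O[at_top](\<lambda>_. 1)"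
  shows "\<exists>K. \<forall>x>a. norm (q x) \<le> K"
proof -
  obtain c where "\<forall>\<^sub>F x in at_right a. norm (q x) \<le> c"
    using assms(2) by (elim landau_o.bigE) auto
  then obtain b where b: "a < b" "\<And>x. a < x \<Longrightarrow> x < b \<Longrightarrow> norm (q x) \<le> c"
    unfolding eventually_at_right_field by auto
  have "continuous_on {b..} q"
    using b(1) by (intro continuous_on_subset[OF assms(1)]) auto
  then obtain d where d: "\<And>x. b \<le> x \<Longrightarrow> norm (q x) \<le> d"
    using bounded_on_atLeast assms(3) by blast
  have "norm (q x) \<le> max c d" if "a < x" for x
    using b(2)[of x] d[of x] that by (cases "x < b") auto
  then show ?thesis by blast
qed

lemma bounded_along_psi:
  fixes q :: "real \<Rightarrow> real"
  assumes "continuous_on {0<..} q" and "q \<in> O[at_right 0](\<lambda>_. 1)" and "q \<in> O[at_top](\<lambda>_. 1)"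
  shows "\<exists>K. \<forall>t>0. \<bar>q (psi t)\<bar> \<le> K"
proof -
  obtain K where "\<forall>u>0. norm (q u) \<le> K"
    using bounded_on_greaterThan[OF assms] by blast
  then have "\<forall>t>0. \<bar>q (psi t)\<bar> \<le> K" by (simp add: psi_pos_phi_psi)
  then show ?thesis by blast
qed

lemma continuous_on_delta: "continuous_on A delta"
  unfolding delta_def by (intro continuous_intros)

lemma delta_nonzero: "0 < u \<Longrightarrow> delta u \<noteq> 0"
  using delta_pos by force

lemma phi_nonzero: "0 < u \<Longrightarrow> phi u \<noteq> 0"
  using phi_pos by force

lemma f2_weighted_bounded: "\<exists>K. \<forall>t>0. \<bar>f2 t\<bar> * t \<le> K"
proof -
  have "\<exists>K. \<forall>t>0. \<bar>f2_u (psi t) * phi (psi t)\<bar> \<le> K"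
  proof (rule bounded_along_psi[of "\<lambda>u. f2_u u * phi u"])
    show "continuous_on {0<..} (\<lambda>u. f2_u u * phi u)" unfolding f2_u_def
      by (intro continuous_intros continuous_on_delta continuous_on_phi) (auto simp: delta_nonzero)
  qed (unfold f2_u_def delta_def phi_def, real_asymp, real_asymp)
  then show ?thesis by (simp add: f2_def abs_mult psi_pos_phi_psi)
qed

lemma f3_weighted_bounded: "\<exists>K. \<forall>t>0. \<bar>f3 t\<bar> * t ^ 2 \<le> K"
proof -
  have "\<exists>K. \<forall>t>0. \<bar>f3_u (psi t) * phi (psi t) ^ 2\<bar> \<le> K"
  proof (rule bounded_along_psi[of "\<lambda>u. f3_u u * phi u ^ 2"])
    show "continuous_on {0<..} (\<lambda>u. f3_u u * phi u ^ 2)" unfolding f3_u_def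
      by (intro continuous_intros continuous_on_delta continuous_on_phi) (auto simp: delta_nonzero)
  qed (unfold f3_u_def delta_def phi_def, real_asymp, real_asymp)
  then show ?thesis by (simp add: f3_def abs_mult psi_pos_phi_psi)
qed

lemma j1_weighted_bounded: "\<exists>K. \<forall>t>0. \<bar>j1 t\<bar> * t \<le> K"
proof -
  have "\<exists>K. \<forall>t>0. \<bar>j1_u (psi t) * phi (psi t)\<bar> \<le> K"
  proof (rule bounded_along_psi[of "\<lambda>u. j1_u u * phi u"])
    show "continuous_on {0<..} (\<lambda>u. j1_u u * phi u)" unfolding j1_u_def
      by (intro continuous_intros continuous_on_delta continuous_on_phi) (auto simp: delta_nonzero)
  qed (unfold j1_u_def delta_def phi_def, real_asymp, real_asymp)
  then show ?thesis by (simp add: j1_def abs_mult psi_pos_phi_psi)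
qed

lemma j2_weighted_bounded: "\<exists>K. \<forall>t>0. \<bar>j2 t\<bar> * t ^ 2 \<le> K"
proof -
  have "\<exists>K. \<forall>t>0. \<bar>j2_u (psi t) * phi (psi t) ^ 2\<bar> \<le> K"
  proof (rule bounded_along_psi[of "\<lambda>u. j2_u u * phi u ^ 2"])
    show "continuous_on {0<..} (\<lambda>u. j2_u u * phi u ^ 2)" unfolding j2_u_def
      by (intro continuous_intros continuous_on_delta continuous_on_phi) (auto simp: delta_nonzero)
  qed (unfold j2_u_def delta_def phi_def, real_asymp, real_asymp)
  then show ?thesis by (simp add: j2_def abs_mult psi_pos_phi_psi)
qed

lemma exp_neg_f1_le_linear: "\<exists>K. \<forall>t>0. exp (- f1 t) \<le> K * t"
proof -
  have "\<exists>K. \<forall>t>0. \<bar>tanh (psi t) ^ 2 / phi (psi t)\<bar> \<le> K"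
  proof (rule bounded_along_psi[of "\<lambda>u. tanh u ^ 2 / phi u"])
    show "continuous_on {0<..} (\<lambda>u. tanh u ^ 2 / phi u)"
      by (intro continuous_intros continuous_on_phi) (auto simp: phi_nonzero)
  qed (unfold phi_def, real_asymp, real_asymp)
  then show ?thesis by (simp add: exp_neg_f1 psi_pos_phi_psi field_simps)
qed

section \<open>The Stirling prefactor\<close>

definition stirling_factor :: "nat \<Rightarrow> real" where
  "stirling_factor g = sqrt (real g) * real g ^ g / (sqrt (2 * pi) * exp (real g) * fact g)"

definition stirling_log_ratio :: "real \<Rightarrow> real" where
  "stirling_log_ratio y = 1 + (y - 1/2) * ln ((y - 1) / y)"

lemma stirling_factor_pos: "0 < g \<Longrightarrow> 0 < stirling_factor g"
  by (simp add: stirling_factor_def)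

lemma Omega_eq:
  "0 < g \<Longrightarrow> Omega n g = stirling_factor g * real n ^ (2 * g - 2)
     * exp (real n * fF (real g / real n) + jJ (real g / real n))"
  by (simp add: Omega_def stirling_factor_def)

lemma stirling_factor_ratio:
  assumes "0 < m"
  shows "stirling_factor m / stirling_factor (Suc m) = exp (stirling_log_ratio (real m + 1))"
proof -
  define M where "M = real m"
  have M: "0 < M" using assms by (simp add: M_def)
  define q where "q = M / (M + 1)"
  have q: "0 < q" using M by (simp add: q_def)
  have "stirling_log_ratio (M + 1) = 1 + M * ln q + (1/2) * ln q"
    by (simp add: stirling_log_ratio_def q_def algebra_simps)
  also have "exp \<dots> = exp 1 * q ^ m * sqrt q"
  proof -
    have "sqrt q = exp (ln q / 2)"
      using q by (intro real_sqrt_unique) (simp_all add: power2_eq_square exp_add[symmetric])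
    then show ?thesis using q by (simp add: exp_add M_def exp_of_nat_mult)
  qed
  also have "\<dots> = exp 1 * (M ^ m / (M + 1) ^ m) * (sqrt M / sqrt (M + 1))"
    by (simp add: q_def power_divide real_sqrt_divide)
  also have "\<dots> = stirling_factor m / stirling_factor (Suc m)"
  proof -
    define P where "P = sqrt (2 * pi) * exp M * fact m"
    have P: "0 < P" by (simp add: P_def)
    have "stirling_factor (Suc m) = (M + 1) * (sqrt (M + 1) * (M + 1) ^ m) / ((M + 1) * (P * exp 1))"
      unfolding stirling_factor_def P_def M_def by (simp add: exp_add mult_ac add_ac)
    also have "\<dots> = sqrt (M + 1) * (M + 1) ^ m / (P * exp 1)"
      using M by simp
    finally have Suc_m: "stirling_factor (Suc m) = sqrt (M + 1) * (M + 1) ^ m / (P * exp 1)" .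
    have m: "stirling_factor m = sqrt M * M ^ m / P"
      by (simp add: stirling_factor_def P_def M_def)
    show ?thesis unfolding Suc_m m using M P by (simp add: field_simps)
  qed
  finally show ?thesis by (simp add: M_def)
qed

lemma stirling_log_ratio_bound: "\<exists>K. \<forall>y\<ge>2. \<bar>stirling_log_ratio y\<bar> * y ^ 2 \<le> K"
proof -
  have "continuous_on {2..} (\<lambda>y. stirling_log_ratio y * y ^ 2)"
    unfolding stirling_log_ratio_def by (intro continuous_intros) (auto simp: field_simps)
  moreover have "(\<lambda>y. stirling_log_ratio y * y ^ 2) \<in> O[at_top](\<lambda>_. 1)"
    unfolding stirling_log_ratio_def by real_asymp
  ultimately show ?thesis
    using bounded_on_atLeast by (fastforce simp: abs_mult)
qed

lemma beta_eq_exp: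
  assumes "0 < n" and "2 \<le> g"
  shows "beta n g = exp (stirling_log_ratio (real g)
    + real n * (fF ((real g - 1) / real n) - fF (real g / real n))
    + (jJ ((real g - 1) / real n) - jJ (real g / real n)))"
proof -
  obtain m where g: "g = Suc m" and m: "0 < m" using assms(2) by (cases g) auto
  define e where "e = (\<lambda>k::nat. exp (real n * fF (real k / real n) + jJ (real k / real n)))"
  have "2 * g - 2 = (2 * m - 2) + 2" using m g by simp
  then have "real n ^ (2 * g - 2) = real n ^ (2 * m - 2) * real n ^ 2"
    by (simp only: power_add)
  then have "beta n g = stirling_factor m / stirling_factor g * (e m / e g)"
    using assms m stirling_factor_pos[of m] stirling_factor_pos[of g]
    by (simp add: beta_def Omega_eq e_def g)
  also have "\<dots> = exp (stirling_log_ratio (real g)) * (e m / e g)"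
    using stirling_factor_ratio[OF m] by (simp add: g add.commute)
  finally show ?thesis
    by (simp add: e_def g exp_add exp_diff algebra_simps)
qed

section \<open>Second-order expansion of beta\<close>

lemma fF_taylor:
  assumes "0 < a" and "a < b"
  obtains \<xi> where "a < \<xi>" "\<xi> < b"
    "fF a = fF b + f1 b * (a - b) + f2 b / 2 * (a - b) ^ 2 + f3 \<xi> / 6 * (a - b) ^ 3"
proof -
  let ?D = "(!) [fF, f1, f2, f3]"
  have "\<forall>m t. m < 3 \<and> a \<le> t \<and> t \<le> b \<longrightarrow> (?D m has_real_derivative ?D (Suc m) t) (at t)"
  proof (intro allI impI)
    fix m :: nat and t :: real assume "m < 3 \<and> a \<le> t \<and> t \<le> b"
    then have "0 < t" "m = 0 \<or> m = 1 \<or> m = 2" using assms by auto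
    then show "(?D m has_real_derivative ?D (Suc m) t) (at t)"
      using has_real_derivative_fF has_real_derivative_f1 has_real_derivative_f2 by auto
  qed
  then obtain \<xi> where "a < \<xi>" "\<xi> < b"
    "fF a = (\<Sum>m<3. ?D m b / fact m * (a - b) ^ m) + ?D 3 \<xi> / fact 3 * (a - b) ^ 3"
    using Taylor_down[of 3 ?D fF a b b] assms by auto
  then show thesis by (intro that) (simp_all add: eval_nat_numeral)
qed

lemma jJ_taylor:
  assumes "0 < a" and "a < b"
  obtains \<eta> where "a < \<eta>" "\<eta> < b" "jJ a = jJ b + j1 b * (a - b) + j2 \<eta> / 2 * (a - b) ^ 2"
proof -
  let ?D = "(!) [jJ, j1, j2]"
  have "\<forall>m t. m < 2 \<and> a \<le> t \<and> t \<le> b \<longrightarrow> (?D m has_real_derivative ?D (Suc m) t) (at t)"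
  proof (intro allI impI)
    fix m :: nat and t :: real assume "m < 2 \<and> a \<le> t \<and> t \<le> b"
    then have "0 < t" "m = 0 \<or> m = 1" using assms by auto
    then show "(?D m has_real_derivative ?D (Suc m) t) (at t)"
      using has_real_derivative_jJ has_real_derivative_j1 by auto
  qed
  then obtain \<eta> where "a < \<eta>" "\<eta> < b"
    "jJ a = (\<Sum>m<2. ?D m b / fact m * (a - b) ^ m) + ?D 2 \<eta> / fact 2 * (a - b) ^ 2"
    using Taylor_down[of 2 ?D jJ a b b] assms by auto
  then show thesis by (intro that) (simp_all add: eval_nat_numeral)
qed

lemma abs_exp_sub_one_sub_le: "\<bar>exp x - 1 - x\<bar> \<le> x ^ 2 * exp \<bar>x\<bar>" for x :: real
proof -
  obtain t where t: "\<bar>t\<bar> \<le> \<bar>x\<bar>" "exp x = (\<Sum>m<2. x ^ m / fact m) + exp t / fact 2 * x ^ 2"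
    using Maclaurin_exp_le[of x 2] by blast
  then have "\<bar>exp x - 1 - x\<bar> = exp t / 2 * x ^ 2" by (simp add: eval_nat_numeral)
  also have "\<dots> \<le> exp \<bar>x\<bar> * x ^ 2"
  proof (rule mult_right_mono)
    have "t \<le> \<bar>x\<bar>" using t(1) by arith
    then have "exp t \<le> exp \<bar>x\<bar>" by simp
    then show "exp t / 2 \<le> exp \<bar>x\<bar>" using exp_gt_zero[of t] by linarith
  qed simp
  finally show ?thesis by (simp add: mult.commute)
qed

lemma abs_exp_add_sub_one_sub_le:
  fixes a r A B G :: real
  assumes "1 \<le> G" and a: "\<bar>a\<bar> * G \<le> A" and r: "\<bar>r\<bar> * G ^ 2 \<le> B"
  shows "\<bar>exp (a + r) - 1 - a\<bar> * G ^ 2 \<le> (A + B) ^ 2 * exp (A + B) + B"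
proof -
  have "\<bar>r\<bar> * G \<le> \<bar>r\<bar> * G ^ 2"
    using assms(1) by (intro mult_left_mono) (auto simp: power2_eq_square)
  moreover have "\<bar>a + r\<bar> * G \<le> \<bar>a\<bar> * G + \<bar>r\<bar> * G"
    using assms(1) abs_triangle_ineq[of a r] by (simp add: distrib_right[symmetric] mult_right_mono)
  ultimately have E: "\<bar>a + r\<bar> * G \<le> A + B" using a r by linarith
  moreover have "\<bar>a + r\<bar> \<le> \<bar>a + r\<bar> * G"
    using assms(1) mult_left_mono[of 1 G "\<bar>a + r\<bar>"] by simp
  ultimately have "\<bar>a + r\<bar> \<le> A + B" by linarith
  have "\<bar>exp (a + r) - 1 - (a + r)\<bar> * G ^ 2 \<le> (a + r) ^ 2 * exp \<bar>a + r\<bar> * G ^ 2"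
    by (intro mult_right_mono abs_exp_sub_one_sub_le) simp
  also have "\<dots> = (\<bar>a + r\<bar> * G) ^ 2 * exp \<bar>a + r\<bar>"
    by (simp add: power_mult_distrib)
  also have "\<dots> \<le> (A + B) ^ 2 * exp (A + B)"
    using E \<open>\<bar>a + r\<bar> \<le> A + B\<close> assms(1) by (intro mult_mono power_mono) auto
  finally have "\<bar>exp (a + r) - 1 - (a + r)\<bar> * G ^ 2 \<le> (A + B) ^ 2 * exp (A + B)" .
  moreover have "\<bar>exp (a + r) - 1 - a\<bar> * G ^ 2 \<le> \<bar>exp (a + r) - 1 - (a + r)\<bar> * G ^ 2 + \<bar>r\<bar> * G ^ 2"
    by (simp add: distrib_right[symmetric] mult_right_mono)
  ultimately show ?thesis using r by linarith
qed

lemma abs_mult_square_le_of_double: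
  fixes c \<theta> \<zeta> K :: real
  assumes "\<bar>c\<bar> * \<zeta> ^ 2 \<le> K" and "0 \<le> \<theta>" and "\<theta> \<le> 2 * \<zeta>"
  shows "\<bar>c\<bar> * \<theta> ^ 2 \<le> 4 * K"
proof -
  have "\<theta> ^ 2 \<le> (2 * \<zeta>) ^ 2" using assms(2,3) by (intro power_mono) auto
  then have "\<bar>c\<bar> * \<theta> ^ 2 \<le> \<bar>c\<bar> * (2 * \<zeta>) ^ 2" by (rule mult_left_mono) simp
  also have "\<dots> = 4 * (\<bar>c\<bar> * \<zeta> ^ 2)" by (simp add: power_mult_distrib)
  finally show ?thesis using assms(1) by linarith
qed

lemma beta_expansion:
  fixes n g :: nat
  assumes n: "0 < n" and g: "2 \<le> g"
    and f3: "\<And>t. 0 < t \<Longrightarrow> \<bar>f3 t\<bar> * t ^ 2 \<le> K"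
    and j2: "\<And>t. 0 < t \<Longrightarrow> \<bar>j2 t\<bar> * t ^ 2 \<le> K"
    and rho: "\<And>y. 2 \<le> y \<Longrightarrow> \<bar>stirling_log_ratio y\<bar> * y ^ 2 \<le> K"
  obtains r where
    "beta n g = exp (- f1 (real g / real n) + (f2 (real g / real n) / 2 - j1 (real g / real n)) / real n + r)"
    "\<bar>r\<bar> * real g ^ 2 \<le> 4 * K"
proof -
  define N G where "N = real n" and "G = real g"
  define \<theta> \<theta>' where "\<theta> = G / N" and "\<theta>' = (G - 1) / N"
  have N: "0 < N" and G: "2 \<le> G" using n g by (simp_all add: N_def G_def)
  have \<theta>: "0 < \<theta>'" "\<theta>' < \<theta>" "\<theta> \<le> 2 * \<theta>'" "\<theta>' - \<theta> = - 1 / N" "\<theta> * N = G"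
    using N G by (simp_all add: \<theta>_def \<theta>'_def field_simps)
  obtain \<xi> where \<xi>: "\<theta>' < \<xi>" "\<xi> < \<theta>"
    "fF \<theta>' = fF \<theta> + f1 \<theta> * (\<theta>' - \<theta>) + f2 \<theta> / 2 * (\<theta>' - \<theta>) ^ 2 + f3 \<xi> / 6 * (\<theta>' - \<theta>) ^ 3"
    using fF_taylor \<theta>(1,2) by blast
  obtain \<eta> where \<eta>: "\<theta>' < \<eta>" "\<eta> < \<theta>"
    "jJ \<theta>' = jJ \<theta> + j1 \<theta> * (\<theta>' - \<theta>) + j2 \<eta> / 2 * (\<theta>' - \<theta>) ^ 2"
    using jJ_taylor \<theta>(1,2) by blast
  define r where "r = stirling_log_ratio G - f3 \<xi> * (\<theta> / G) ^ 2 / 6 + j2 \<eta> * (\<theta> / G) ^ 2 / 2"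
  have "beta n g = exp (stirling_log_ratio G + N * (fF \<theta>' - fF \<theta>) + (jJ \<theta>' - jJ \<theta>))"
    using beta_eq_exp[OF n g] by (simp add: N_def G_def \<theta>_def \<theta>'_def)
  also have "\<dots> = exp (- f1 \<theta> + (f2 \<theta> / 2 - j1 \<theta>) / N + r)"
    unfolding \<xi>(3) \<eta>(3) \<theta>(4) r_def using N \<theta>(5)[symmetric] \<theta>(1,2)
    by (simp add: field_simps power2_eq_square power3_eq_cube)
  finally have beta: "beta n g = exp (- f1 \<theta> + (f2 \<theta> / 2 - j1 \<theta>) / N + r)" .
  have "\<bar>f3 \<xi>\<bar> * \<theta> ^ 2 \<le> 4 * K" "\<bar>j2 \<eta>\<bar> * \<theta> ^ 2 \<le> 4 * K"
    using f3[of \<xi>] j2[of \<eta>] \<theta> \<xi>(1) \<eta>(1) by (auto intro: abs_mult_square_le_of_double)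
  have rG: "r * G ^ 2 = stirling_log_ratio G * G ^ 2 - f3 \<xi> * \<theta> ^ 2 / 6 + j2 \<eta> * \<theta> ^ 2 / 2"
    using G by (simp add: r_def field_simps)
  have "\<bar>r\<bar> * G ^ 2 = \<bar>stirling_log_ratio G * G ^ 2 - f3 \<xi> * \<theta> ^ 2 / 6 + j2 \<eta> * \<theta> ^ 2 / 2\<bar>"
    unfolding rG[symmetric] by (simp add: abs_mult)
  also have "\<dots> \<le> \<bar>stirling_log_ratio G * G ^ 2\<bar> + \<bar>f3 \<xi> * \<theta> ^ 2 / 6\<bar> + \<bar>j2 \<eta> * \<theta> ^ 2 / 2\<bar>"
    by arith
  also have "\<dots> = \<bar>stirling_log_ratio G\<bar> * G ^ 2 + \<bar>f3 \<xi>\<bar> * \<theta> ^ 2 / 6 + \<bar>j2 \<eta>\<bar> * \<theta> ^ 2 / 2"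
    by (simp add: abs_mult)
  also have "\<dots> \<le> K + 4 * K / 6 + 4 * K / 2"
    using rho[OF G] \<open>\<bar>f3 \<xi>\<bar> * \<theta> ^ 2 \<le> 4 * K\<close> \<open>\<bar>j2 \<eta>\<bar> * \<theta> ^ 2 \<le> 4 * K\<close>
    by linarith
  also have "\<dots> \<le> 4 * K" using rho[of 2] abs_ge_zero[of "stirling_log_ratio 2"] by simp
  finally show thesis
    using beta by (intro that[of r]) (simp_all add: N_def G_def \<theta>_def)
qed

lemma beta_error_bound:
  obtains M where "0 \<le> M"
    "\<And>n g. 0 < n \<Longrightarrow> 2 \<le> g \<Longrightarrow>
      \<bar>beta n g - exp (- f1 (real g / real n))
        - exp (- f1 (real g / real n)) / real n * (f2 (real g / real n) / 2 - j1 (real g / real n))\<bar>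
      \<le> M * exp (- f1 (real g / real n)) / real g ^ 2"
proof -
  obtain Kf2 Kf3 Kj1 Kj2 Kr where
    "\<forall>t>0. \<bar>f2 t\<bar> * t \<le> Kf2" "\<forall>t>0. \<bar>f3 t\<bar> * t ^ 2 \<le> Kf3"
    "\<forall>t>0. \<bar>j1 t\<bar> * t \<le> Kj1" "\<forall>t>0. \<bar>j2 t\<bar> * t ^ 2 \<le> Kj2"
    "\<forall>y\<ge>2. \<bar>stirling_log_ratio y\<bar> * y ^ 2 \<le> Kr"
    using f2_weighted_bounded f3_weighted_bounded j1_weighted_bounded j2_weighted_bounded
      stirling_log_ratio_bound by blast
  then obtain K where K: "\<And>t. 0 < t \<Longrightarrow> \<bar>f2 t\<bar> * t \<le> K" "\<And>t. 0 < t \<Longrightarrow> \<bar>f3 t\<bar> * t ^ 2 \<le> K"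
    "\<And>t. 0 < t \<Longrightarrow> \<bar>j1 t\<bar> * t \<le> K" "\<And>t. 0 < t \<Longrightarrow> \<bar>j2 t\<bar> * t ^ 2 \<le> K"
    "\<And>y. 2 \<le> y \<Longrightarrow> \<bar>stirling_log_ratio y\<bar> * y ^ 2 \<le> K"
    by (intro that[of "max Kf2 (max Kf3 (max Kj1 (max Kj2 Kr)))"]) (simp_all add: le_max_iff_disj)
  have "0 \<le> K" using K(1)[of 1] abs_ge_zero[of "f2 1"] by simp
  define A B where "A = 3 / 2 * K" and "B = 4 * K"
  show thesis
  proof (rule that[of "(A + B) ^ 2 * exp (A + B) + B"])
    show "0 \<le> (A + B) ^ 2 * exp (A + B) + B" using \<open>0 \<le> K\<close> by (simp add: B_def)
    fix n g :: nat assume n: "0 < n" and g: "2 \<le> g"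
    define \<theta> s a where "\<theta> = real g / real n" and "s = exp (- f1 \<theta>)"
      and "a = (f2 \<theta> / 2 - j1 \<theta>) / real n"
    have \<theta>: "0 < \<theta>" "\<theta> * real n = real g" using n g by (simp_all add: \<theta>_def)
    obtain r where beta: "beta n g = exp (- f1 \<theta> + a + r)" and r: "\<bar>r\<bar> * real g ^ 2 \<le> B"
      using beta_expansion[OF n g K(2,4,5)] unfolding \<theta>_def a_def B_def by blast
    have ag: "a * real g = f2 \<theta> * \<theta> / 2 - j1 \<theta> * \<theta>" using n by (simp add: a_def \<theta>(2)[symmetric] field_simps)
    have "\<bar>a\<bar> * real g = \<bar>f2 \<theta> * \<theta> / 2 - j1 \<theta> * \<theta>\<bar>"
      unfolding ag[symmetric] by (simp add: abs_mult)
    also have "\<dots> \<le> \<bar>f2 \<theta> * \<theta> / 2\<bar> + \<bar>j1 \<theta> * \<theta>\<bar>" by (rule abs_triangle_ineq4)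
    finally have "\<bar>a\<bar> * real g \<le> \<bar>f2 \<theta>\<bar> * \<theta> / 2 + \<bar>j1 \<theta>\<bar> * \<theta>"
      using \<theta>(1) by (simp add: abs_mult)
    then have a: "\<bar>a\<bar> * real g \<le> A" using K(1,3)[OF \<theta>(1)] by (simp add: A_def)
    have "beta n g = s * exp (a + r)" by (simp add: beta s_def mult_exp_exp add.assoc)
    then have "beta n g - s - s * a = s * (exp (a + r) - 1 - a)" by (simp add: algebra_simps)
    then have "\<bar>beta n g - s - s * a\<bar> = s * \<bar>exp (a + r) - 1 - a\<bar>" by (simp add: abs_mult s_def)
    also have "\<dots> \<le> s * (((A + B) ^ 2 * exp (A + B) + B) / real g ^ 2)"
    proof (rule mult_left_mono)
      have "1 \<le> real g" using g by simp
      from abs_exp_add_sub_one_sub_le[OF this a r]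
      show "\<bar>exp (a + r) - 1 - a\<bar> \<le> ((A + B) ^ 2 * exp (A + B) + B) / real g ^ 2"
        using g by (simp add: pos_le_divide_eq)
    qed (simp add: s_def)
    finally show "\<bar>beta n g - exp (- f1 (real g / real n))
        - exp (- f1 (real g / real n)) / real n * (f2 (real g / real n) / 2 - j1 (real g / real n))\<bar>
      \<le> ((A + B) ^ 2 * exp (A + B) + B) * exp (- f1 (real g / real n)) / real g ^ 2"
      by (simp add: s_def a_def \<theta>_def mult_ac)
  qed
qed

lemma weight_over_square_le:
  fixes N G s K :: real
  assumes N: "0 < N" and G: "0 < G" and NG: "1 \<le> N + G" and K: "0 \<le> K"
    and s: "s \<le> 1" "s \<le> K * (G / N)"
    and \<theta>: "(N + G) powr (-2/3) \<le> G / N"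
  shows "s / G ^ 2 \<le> 4 * max 1 K * (N + G) powr (-4/3)"
proof -
  define x P where "x = N + G" and "P = (N + G) powr (-2/3)"
  have x: "0 < x" using N G by (simp add: x_def)
  have P: "0 < P" "P \<le> 1" "P ^ 2 = x powr (-4/3)" "P ^ 3 * x ^ 2 = 1"
  proof -
    show "0 < P" "P \<le> 1" using x NG powr_mono[of "-2/3" 0 x] by (simp_all add: P_def x_def)
    show "P ^ 2 = x powr (-4/3)" using x by (simp add: P_def x_def powr_power)
    have "P ^ 3 = x powr (-2)" using x by (simp add: P_def x_def powr_power)
    then show "P ^ 3 * x ^ 2 = 1" using x by (simp add: powr_minus_divide powr_numeral)
  qed
  have "4 / x ^ 2 \<le> 4 * max 1 K * P ^ 2"
  proof -
    have "4 / x ^ 2 = 4 * P ^ 3" using P(4) x by (simp add: field_simps)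
    also have "\<dots> \<le> 4 * P ^ 2" using P(1,2) by (simp add: power_decreasing)
    also have "\<dots> \<le> 4 * max 1 K * P ^ 2" using P(1) by simp
    finally show ?thesis .
  qed
  consider "G \<le> N" | "N < G" by linarith
  then have "s / G ^ 2 \<le> 4 * max 1 K * P ^ 2"
  proof cases
    case 1
    have "x ^ 2 \<le> (2 * N) ^ 2" using 1 x by (intro power_mono) (auto simp: x_def)
    have "1 = P ^ 3 * x ^ 2" using P(4) by simp
    also have "\<dots> \<le> P ^ 3 * (2 * N) ^ 2"
      using \<open>x ^ 2 \<le> (2 * N) ^ 2\<close> P(1) by (intro mult_left_mono) auto
    also have "\<dots> = 4 * P ^ 2 * (N * (P * N))" by (simp add: power2_eq_square power3_eq_cube)
    also have "\<dots> \<le> 4 * P ^ 2 * (N * G)"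
      using \<theta> N P(1) by (intro mult_left_mono) (auto simp: P_def field_simps)
    finally have "1 / (N * G) \<le> 4 * P ^ 2" using N G by (simp add: divide_le_eq)
    have "s / G ^ 2 \<le> K * (G / N) / G ^ 2" using s(2) by (intro divide_right_mono) auto
    also have "\<dots> = K * (1 / (N * G))" using G by (simp add: field_simps power2_eq_square)
    also have "\<dots> \<le> K * (4 * P ^ 2)"
      using \<open>1 / (N * G) \<le> 4 * P ^ 2\<close> K by (rule mult_left_mono)
    also have "\<dots> \<le> 4 * max 1 K * P ^ 2" using P(1) by (simp add: mult_right_mono)
    finally show ?thesis .
  next
    case 2
    have "x ^ 2 \<le> (2 * G) ^ 2" using 2 x by (intro power_mono) (auto simp: x_def)
    have "s / G ^ 2 \<le> 1 / G ^ 2" using s(1) by (intro divide_right_mono) auto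
    also have "\<dots> \<le> 4 / x ^ 2"
      using \<open>x ^ 2 \<le> (2 * G) ^ 2\<close> x G by (simp add: field_simps power_mult_distrib)
    finally show ?thesis using \<open>4 / x ^ 2 \<le> 4 * max 1 K * P ^ 2\<close> by linarith
  qed
  then show ?thesis using P(3) by (simp add: x_def)
qed

lemma genus_one_condition:
  fixes n :: nat
  assumes "(real n + 1) powr (-2/3) \<le> 1 / real n"
  shows "n \<le> 2"
proof (rule ccontr)
  assume "\<not> n \<le> 2"
  then have N: "3 \<le> real n" by simp
  define x where "x = real n + 1"
  have x: "0 < x" using N by (simp add: x_def)
  have "(x powr (-2/3)) ^ 3 = x powr (-2)" using x by (simp add: powr_power)
  then have "(x powr (-2/3)) ^ 3 = 1 / x ^ 2" using x by (simp add: powr_minus_divide powr_numeral)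
  moreover have "(x powr (-2/3)) ^ 3 \<le> (1 / real n) ^ 3"
    using assms by (intro power_mono) (simp_all add: x_def)
  ultimately have "1 / x ^ 2 \<le> 1 / real n ^ 3" by (simp add: power_divide)
  moreover have "0 < real n ^ 3" using N by simp
  ultimately have "real n ^ 3 \<le> x ^ 2" using x by (simp add: divide_simps)
  moreover have "x ^ 2 < real n ^ 3"
  proof -
    have "x ^ 2 = real n ^ 2 + 2 * real n + 1" by (simp add: x_def power2_eq_square algebra_simps)
    also have "\<dots> < 3 * real n ^ 2"
    proof -
      have "3 * real n \<le> real n * real n" using N by (intro mult_right_mono) auto
      then show ?thesis using N unfolding power2_eq_square by linarith
    qed
    also have "\<dots> \<le> real n * real n ^ 2" using N by (intro mult_right_mono) auto
    finally show ?thesis by (simp add: power3_eq_cube power2_eq_square)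
  qed
  ultimately show False by simp
qed

definition beta_error :: "nat \<Rightarrow> nat \<Rightarrow> real" where
  "beta_error n g = \<bar>beta n g - exp (- deriv fF (real g / real n))
        - exp (- deriv fF (real g / real n)) / real n
          * (deriv (deriv fF) (real g / real n) / 2 - deriv jJ (real g / real n))\<bar>"

lemma beta_error_large_genus:
  obtains C where "0 \<le> C"
    "\<And>n g. 0 < n \<Longrightarrow> 2 \<le> g \<Longrightarrow> (real n + real g) powr (-2/3) \<le> real g / real n \<Longrightarrow>
       beta_error n g \<le> C * (real n + real g) powr (-4/3)"
proof -
  obtain M where M: "0 \<le> M"
    "\<And>n g. 0 < n \<Longrightarrow> 2 \<le> g \<Longrightarrow>
      \<bar>beta n g - exp (- f1 (real g / real n))
        - exp (- f1 (real g / real n)) / real n * (f2 (real g / real n) / 2 - j1 (real g / real n))\<bar>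
      \<le> M * exp (- f1 (real g / real n)) / real g ^ 2"
    using beta_error_bound by blast
  obtain K where K: "\<forall>t>0. exp (- f1 t) \<le> K * t" using exp_neg_f1_le_linear by blast
  have "exp (- f1 1) \<le> K" using K[rule_format, of 1] by simp
  then have "0 \<le> K" using exp_gt_zero[of "- f1 1"] by linarith
  show thesis
  proof (rule that[of "M * (4 * max 1 K)"])
    show "0 \<le> M * (4 * max 1 K)" using M(1) by simp
    fix n g :: nat assume n: "0 < n" and g: "2 \<le> g"
      and cond: "(real n + real g) powr (-2/3) \<le> real g / real n"
    define \<theta> where "\<theta> = real g / real n"
    have \<theta>: "0 < \<theta>" using n g by (simp add: \<theta>_def)
    have "beta_error n g \<le> M * (exp (- f1 \<theta>) / real g ^ 2)"
      using M(2)[OF n g]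
      by (simp add: beta_error_def deriv_fF deriv2_fF deriv_jJ \<theta> \<theta>_def[symmetric])
    also have "\<dots> \<le> M * (4 * max 1 K * (real n + real g) powr (-4/3))"
    proof (rule mult_left_mono[OF weight_over_square_le M(1)])
      show "exp (- f1 \<theta>) \<le> 1" using exp_neg_f1[OF \<theta>] tanh_real_bounds[of "psi \<theta>"]
        by (simp add: abs_square_le_1 abs_le_iff)
      show "exp (- f1 \<theta>) \<le> K * (real g / real n)" using K[rule_format, OF \<theta>] unfolding \<theta>_def .
    qed (use n g cond \<open>0 \<le> K\<close> in auto)
    finally show "beta_error n g \<le> M * (4 * max 1 K) * (real n + real g) powr (-4/3)"
      by (simp add: mult_ac)
  qed
qed

theorem lemma5:
  "\<exists>C>0. \<forall>n g :: nat. n \<ge> 2 \<longrightarrow> g \<ge> 1 \<longrightarrow>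
     real g / real n \<ge> (real n + real g) powr (-2/3) \<longrightarrow>
     \<bar>beta n g - exp (- deriv fF (real g / real n))
        - exp (- deriv fF (real g / real n)) / real n
          * (deriv (deriv fF) (real g / real n) / 2 - deriv jJ (real g / real n))\<bar>
     \<le> C * (real n + real g) powr (-4/3)"
proof -
  obtain C0 where C0: "0 \<le> C0"
    "\<And>n g. 0 < n \<Longrightarrow> 2 \<le> g \<Longrightarrow> (real n + real g) powr (-2/3) \<le> real g / real n \<Longrightarrow>
       beta_error n g \<le> C0 * (real n + real g) powr (-4/3)"
    using beta_error_large_genus by blast
  define C where "C = C0 + beta_error 2 1 * 3 powr (4/3) + 1"
  have "0 \<le> beta_error 2 1" by (simp add: beta_error_def)
  then have "0 \<le> beta_error 2 1 * 3 powr (4/3)" by simp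
  have "beta_error n g \<le> C * (real n + real g) powr (-4/3)"
    if "2 \<le> n" "1 \<le> g" "(real n + real g) powr (-2/3) \<le> real g / real n" for n g :: nat
  proof (cases "g = 1")
    case True
    with that genus_one_condition[of n] have "n = 2" by simp
    have "beta_error 2 1 = beta_error 2 1 * 3 powr (4/3) * 3 powr (-4/3)"
      by (simp add: powr_add[symmetric])
    also have "\<dots> \<le> C * 3 powr (-4/3)"
      using C0(1) by (intro mult_right_mono) (auto simp: C_def)
    finally show ?thesis using True \<open>n = 2\<close> by simp
  next
    case False
    then have "beta_error n g \<le> C0 * (real n + real g) powr (-4/3)" using that by (intro C0(2)) auto
    also have "\<dots> \<le> C * (real n + real g) powr (-4/3)"
      using \<open>0 \<le> beta_error 2 1\<close> by (intro mult_right_mono) (auto simp: C_def)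
    finally show ?thesis .
  qed
  moreover have "0 < C" using C0(1) \<open>0 \<le> beta_error 2 1 * 3 powr (4/3)\<close> by (simp add: C_def)
  ultimately show ?thesis unfolding beta_error_def by blast
qed

end
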